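(* Let $n\ge 9$ and let $T^*$ be a chemical tree on $n$ vertices with maximum degree $\Delta(T^* )=4$. Let $\Phi(n)$ be the set of chemical trees $T$ on $n$ vertices having exactly one vertex of degree $4$, $n-5$ vertices of degree $2$, $4$ vertices of degree $1$ (and none of degree $3$), with $m_{1,2}(T)=m_{2,4}(T)=4$, $m_{1,4}(T)=0$ and $m_{2,2}(T)=n-9$. If $T^*\notin\Phi(n)$, then there exists $T\in\Phi(n)$ such that $SO(T)<SO(T^* )$ and $SO_{red}(T)<SO_{red}(T^* )$.
   Context: A chemical tree is a tree with maximum degree at most $4$. $d_G(u)$ is the degree of $u$ and $m_{i,j}(G)$ is the number of edges joining a vertex of degree $i$ to a vertex of degree $j$. $SO(G)=\sum_{uv\in E(G)}\sqrt{d_G(u)^2+d_G(v)^2}$ and $SO_{red}(G)=\sum_{uv\in E(G)}\sqrt{(d_G(u)-1)^2+(d_G(v)-1)^2}$. *)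

theory Defs
  imports Complex_Main
begin

definition simple_graph :: "'a set \<Rightarrow> 'a set set \<Rightarrow> bool" where
  "simple_graph V E \<longleftrightarrow> finite V \<and>
     (\<forall>e\<in>E. \<exists>u v. e = {u, v} \<and> u \<noteq> v \<and> u \<in> V \<and> v \<in> V)"

definition adj :: "'a set set \<Rightarrow> 'a \<Rightarrow> 'a \<Rightarrow> bool" where
  "adj E u v \<longleftrightarrow> {u, v} \<in> E"

definition connected_graph :: "'a set \<Rightarrow> 'a set set \<Rightarrow> bool" where
  "connected_graph V E \<longleftrightarrow> V \<noteq> {} \<and> (\<forall>u\<in>V. \<forall>v\<in>V. (adj E)\<^sup>*\<^sup>* u v)"

definition is_tree :: "'a set \<Rightarrow> 'a set set \<Rightarrow> bool" where
  "is_tree V E \<longleftrightarrow> simple_graph V E \<and> connected_graph V E \<and> card E = card V - 1"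

definition degree :: "'a set set \<Rightarrow> 'a \<Rightarrow> nat" where
  "degree E v = card {e\<in>E. v \<in> e}"

definition chemical_tree :: "'a set \<Rightarrow> 'a set set \<Rightarrow> bool" where
  "chemical_tree V E \<longleftrightarrow> is_tree V E \<and> (\<forall>v\<in>V. degree E v \<le> 4)"

definition max_degree :: "'a set \<Rightarrow> 'a set set \<Rightarrow> nat" where
  "max_degree V E = Max (degree E ` V)"

definition m_edges :: "'a set set \<Rightarrow> nat \<Rightarrow> nat \<Rightarrow> nat" where
  "m_edges E i j = card {e\<in>E. \<exists>u v. e = {u, v} \<and> u \<noteq> v \<and>
      ((degree E u = i \<and> degree E v = j) \<or> (degree E u = j \<and> degree E v = i))}"

text \<open>Sombor index and reduced Sombor index; for an edge e = {u,v},
  the sum over w in e of d(w)^2 is d(u)^2 + d(v)^2.\<close>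
definition SO :: "'a set set \<Rightarrow> real" where
  "SO E = (\<Sum>e\<in>E. sqrt (\<Sum>w\<in>e. (real (degree E w))\<^sup>2))"

definition SO_red :: "'a set set \<Rightarrow> real" where
  "SO_red E = (\<Sum>e\<in>E. sqrt (\<Sum>w\<in>e. (real (degree E w) - 1)\<^sup>2))"

definition num_deg :: "'a set \<Rightarrow> 'a set set \<Rightarrow> nat \<Rightarrow> nat" where
  "num_deg V E k = card {v\<in>V. degree E v = k}"

definition Phi :: "nat \<Rightarrow> 'a set \<Rightarrow> 'a set set \<Rightarrow> bool" where
  "Phi n V E \<longleftrightarrow> chemical_tree V E \<and> card V = n \<and>
     num_deg V E 4 = 1 \<and> num_deg V E 2 = n - 5 \<and> num_deg V E 1 = 4 \<and> num_deg V E 3 = 0 \<and>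
     m_edges E 1 2 = 4 \<and> m_edges E 2 4 = 4 \<and> m_edges E 1 4 = 0 \<and> m_edges E 2 2 = n - 9"

end

theory Submission
  imports Defs
begin

(* Split the weight sqrt (rho (d u) + rho (d v)) of every edge between its two ends: an end of
   degree k gets h k, except that a 4-4 edge gives K to both ends.  The shares are chosen so that
   1-2, 2-2 and 2-4 edges are split exactly and no edge is split with a deficit.  Comparing the
   load d h(d) collected by each vertex with the line through (1, h 1) and (2, 2 h 2) and using
   the handshake lemma, the index of a chemical tree with a vertex of degree 4 equals the common
   index of the trees in Phi(n), minus the excess of one hub, plus the total excess of all
   vertices and the total slack of all edges.  Vertices of degree 1 and 2 have no excess, a vertex
   of degree 3 has positive excess, two hubs already exceed the excess of one, and a leaf next to
   the hub leaves positive slack; so the index is minimal exactly on Phi(n), which contains the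
   spider with four legs.  Both SO and SO_red admit such shares. *)

section \<open>Chemical trees\<close>

locale chem_tree =
  fixes V :: "'a set" and E :: "'a set set"
  assumes chemical: "chemical_tree V E" and card_V_ge_3: "3 \<le> card V"
begin

lemma finite_V: "finite V"
  using chemical unfolding chemical_tree_def is_tree_def simple_graph_def by blast

lemma edgeE:
  assumes "e \<in> E"
  obtains a b where "e = {a, b}" "a \<noteq> b" "a \<in> V" "b \<in> V"
  using chemical assms unfolding chemical_tree_def is_tree_def simple_graph_def by blast

lemma edge_subset: "e \<in> E \<Longrightarrow> e \<subseteq> V"
  by (blast elim: edgeE)

lemma finite_E: "finite E"
  using finite_subset[of E "Pow V"] edge_subset finite_V by blast

lemma card_E: "card E = card V - 1"
  using chemical unfolding chemical_tree_def is_tree_def by blast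

lemma degree_le_4: "v \<in> V \<Longrightarrow> degree E v \<le> 4"
  using chemical unfolding chemical_tree_def by blast

lemma connected: "u \<in> V \<Longrightarrow> v \<in> V \<Longrightarrow> (adj E)\<^sup>*\<^sup>* u v"
  using chemical unfolding chemical_tree_def is_tree_def connected_graph_def by blast

lemma degree_ge_1:
  assumes "v \<in> V"
  shows "1 \<le> degree E v"
proof -
  have "V \<noteq> {v}"
    using card_V_ge_3 by auto
  then obtain u where "u \<in> V" "u \<noteq> v"
    using assms by blast
  then obtain w where "adj E v w"
    using connected[OF assms] by (metis converse_rtranclpE)
  then have "{v, w} \<in> {e \<in> E. v \<in> e}"
    unfolding adj_def by simp
  then have "0 < card {e \<in> E. v \<in> e}"
    using finite_E by (auto simp: card_gt_0_iff)
  then show ?thesis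
    unfolding degree_def by simp
qed

lemma leaf_neighbour_unique:
  assumes "degree E a = 1" "{a, b} \<in> E" "{a, y} \<in> E" "a \<noteq> b"
  shows "y = b"
proof -
  obtain f where f: "{e \<in> E. a \<in> e} = {f}"
    using assms(1) unfolding degree_def by (rule card_1_singletonE)
  have "{a, b} \<in> {e \<in> E. a \<in> e}" "{a, y} \<in> {e \<in> E. a \<in> e}"
    using assms(2,3) by simp_all
  then have "{a, y} = {a, b}"
    unfolding f by simp
  then show ?thesis
    using assms(4) by (auto simp: doubleton_eq_iff)
qed

lemma no_leaf_leaf_edge:
  assumes "{a, b} \<in> E" "a \<noteq> b" "degree E a = 1" "degree E b = 1"
  shows False
proof -
  have ba: "{b, a} \<in> E"
    using assms(1) by (simp add: insert_commute)
  have "x \<in> {a, b}" if "(adj E)\<^sup>*\<^sup>* a x" for x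
    using that
  proof (induction rule: rtranclp_induct)
    case (step y z)
    then have yz: "{y, z} \<in> E"
      unfolding adj_def by simp
    from step.IH consider "y = a" | "y = b"
      by blast
    then show ?case
    proof cases
      case 1
      then show ?thesis
        using leaf_neighbour_unique[OF assms(3,1)] yz assms(2) by simp
    next
      case 2
      then show ?thesis
        using leaf_neighbour_unique[OF assms(4) ba] yz assms(2) by simp
    qed
  qed simp
  then have "V \<subseteq> {a, b}"
    using connected edge_subset[OF assms(1)] by blast
  then have "card V \<le> card {a, b}"
    by (intro card_mono) auto
  then show False
    using card_V_ge_3 assms(2) by simp
qed

lemma degree_cases: "v \<in> V \<Longrightarrow> degree E v \<in> {1, 2, 3, 4}"
  using degree_ge_1 degree_le_4 by force

lemma sum_edges_swap:
  "(\<Sum>e\<in>E. \<Sum>v\<in>e. f e v) = (\<Sum>v\<in>V. \<Sum>e\<in>{e \<in> E. v \<in> e}. f e v)"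
proof -
  have "(\<Sum>v\<in>V. \<Sum>e\<in>{e \<in> E. v \<in> e}. f e v) = (\<Sum>e\<in>E. \<Sum>v\<in>{v \<in> V. v \<in> e}. f e v)"
    by (rule sum.swap_restrict[OF finite_V finite_E, where g = "\<lambda>v e. f e v" and R = "\<lambda>v e. v \<in> e"])
  also have "\<dots> = (\<Sum>e\<in>E. \<Sum>v\<in>e. f e v)"
  proof (rule sum.cong[OF refl])
    fix e assume "e \<in> E"
    then have "{v \<in> V. v \<in> e} = e"
      using edge_subset by blast
    then show "(\<Sum>v\<in>{v \<in> V. v \<in> e}. f e v) = (\<Sum>v\<in>e. f e v)"
      by (rule sum.cong) simp
  qed
  finally show ?thesis
    by (rule sym)
qed

lemma sum_degree_filter: "(\<Sum>v\<in>{v \<in> V. P v}. degree E v) = (\<Sum>e\<in>E. card {v \<in> e. P v})"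
proof -
  have "(\<Sum>v\<in>{v \<in> V. P v}. degree E v) = (\<Sum>v\<in>{v \<in> V. P v}. \<Sum>e\<in>{e \<in> E. v \<in> e}. 1)"
    unfolding degree_def by simp
  also have "\<dots> = (\<Sum>e\<in>E. \<Sum>v\<in>{v \<in> {v \<in> V. P v}. v \<in> e}. 1)"
    using finite_V finite_E by (intro sum.swap_restrict) auto
  also have "\<dots> = (\<Sum>e\<in>E. card {v \<in> e. P v})"
  proof (intro sum.cong refl)
    fix e assume "e \<in> E"
    then have "{v \<in> {v \<in> V. P v}. v \<in> e} = {v \<in> e. P v}"
      using edge_subset by blast
    then show "(\<Sum>v\<in>{v \<in> {v \<in> V. P v}. v \<in> e}. 1) = card {v \<in> e. P v}"
      by simp
  qed
  finally show ?thesis .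
qed

lemma handshake: "(\<Sum>v\<in>V. degree E v) = 2 * (card V - 1)"
proof -
  have "(\<Sum>v\<in>V. degree E v) = (\<Sum>e\<in>E. card e)"
    using sum_degree_filter[of "\<lambda>_. True"] by simp
  also have "\<dots> = (\<Sum>e\<in>E. 2)"
    by (intro sum.cong) (auto elim: edgeE)
  finally show ?thesis
    using card_E by simp
qed

end

section \<open>Trees with a single hub\<close>

definition joins :: "'a set set \<Rightarrow> nat \<Rightarrow> nat \<Rightarrow> 'a set \<Rightarrow> bool" where
  "joins E i j e \<longleftrightarrow> (\<exists>u v. e = {u, v} \<and> u \<noteq> v \<and>
     ((degree E u = i \<and> degree E v = j) \<or> (degree E u = j \<and> degree E v = i)))"

lemma m_edges_eq_card_joins: "m_edges E i j = card {e \<in> E. joins E i j e}"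
  unfolding m_edges_def joins_def ..

lemma joins_doubleton:
  "a \<noteq> b \<Longrightarrow> joins E i j {a, b} \<longleftrightarrow>
     (degree E a = i \<and> degree E b = j) \<or> (degree E a = j \<and> degree E b = i)"
  unfolding joins_def by (auto simp: doubleton_eq_iff)

lemma sum_joins: "joins E i j e \<Longrightarrow> (\<Sum>w\<in>e. f (degree E w)) = f i + f j"
  unfolding joins_def by (auto simp: add.commute)

definition single_hub :: "'a set \<Rightarrow> 'a set set \<Rightarrow> 'a \<Rightarrow> bool" where
  "single_hub V E c \<longleftrightarrow> c \<in> V \<and> degree E c = 4 \<and> (\<forall>v\<in>V. degree E v = 4 \<longrightarrow> v = c) \<and>
     (\<forall>v\<in>V. degree E v \<noteq> 3) \<and> (\<forall>w. {c, w} \<in> E \<longrightarrow> degree E w \<noteq> 1)"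

definition degree_index :: "(nat \<Rightarrow> real) \<Rightarrow> 'a set set \<Rightarrow> real" where
  "degree_index \<rho> E = (\<Sum>e\<in>E. sqrt (\<Sum>w\<in>e. \<rho> (degree E w)))"

lemma SO_eq_degree_index: "SO E = degree_index (\<lambda>k. (real k)\<^sup>2) E"
  unfolding SO_def degree_index_def ..

lemma SO_red_eq_degree_index: "SO_red E = degree_index (\<lambda>k. (real k - 1)\<^sup>2) E"
  unfolding SO_red_def degree_index_def ..

(* Index of every tree in Phi(n): four 1-2 edges, four 2-4 edges and n - 9 edges 2-2. *)
definition phi_index :: "(nat \<Rightarrow> real) \<Rightarrow> nat \<Rightarrow> real" where
  "phi_index \<rho> n = 4 * sqrt (\<rho> 1 + \<rho> 2) + 4 * sqrt (\<rho> 2 + \<rho> 4) + (real n - 9) * sqrt (\<rho> 2 + \<rho> 2)"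

context chem_tree
begin

lemma single_hub_edgeE:
  assumes "single_hub V E c" "e \<in> E"
  obtains a b where "e = {a, b}" "a \<noteq> b" "degree E a = 1" "degree E b = 2" "c \<notin> e"
    | a b where "e = {a, b}" "a \<noteq> b" "degree E a = 2" "degree E b = 2" "c \<notin> e"
    | a where "e = {a, c}" "a \<noteq> c" "degree E a = 2"
proof -
  obtain a b where ab: "e = {a, b}" "a \<noteq> b" "a \<in> V" "b \<in> V"
    using assms(2) by (rule edgeE)
  have hub: "degree E c = 4" "\<And>v. v \<in> V \<Longrightarrow> degree E v = 4 \<Longrightarrow> v = c"
    "\<And>v. v \<in> V \<Longrightarrow> degree E v \<noteq> 3" "\<And>w. {c, w} \<in> E \<Longrightarrow> degree E w \<noteq> 1"
    using assms(1) unfolding single_hub_def by auto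
  have "\<not> (degree E a = 1 \<and> degree E b = 1)"
    using no_leaf_leaf_edge ab assms(2) by blast
  moreover have "degree E a \<in> {1, 2, 4}" "degree E b \<in> {1, 2, 4}"
    using degree_cases hub(3) ab(3,4) by fastforce+
  moreover have "degree E a = 4 \<Longrightarrow> a = c \<and> degree E b \<noteq> 4 \<and> degree E b \<noteq> 1"
    using hub(2,4) ab assms(2) by blast
  moreover have "degree E b = 4 \<Longrightarrow> b = c \<and> degree E a \<noteq> 4 \<and> degree E a \<noteq> 1"
    using hub(2,4) ab assms(2) by (metis insert_commute)
  ultimately consider "degree E a = 1" "degree E b = 2" | "degree E a = 2" "degree E b = 1"
    | "degree E a = 2" "degree E b = 2" | "degree E a = 2" "b = c" | "a = c" "degree E b = 2"
    by fastforce
  then show ?thesis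
  proof cases
    case 1
    then show ?thesis using that(1)[of a b] ab(1,2) hub(1) by fastforce
  next
    case 2
    then show ?thesis using that(1)[of b a] ab(1,2) hub(1) by (fastforce simp: insert_commute)
  next
    case 3
    then show ?thesis using that(2)[of a b] ab(1,2) hub(1) by fastforce
  next
    case 4
    then show ?thesis using that(3) ab(1,2) by blast
  next
    case 5
    then show ?thesis using that(3)[of b] ab(1,2) by (auto simp: insert_commute)
  qed
qed

lemma single_hub_joins:
  assumes "single_hub V E c" "e \<in> E"
  shows "card {v \<in> e. degree E v = 1} = (if joins E 1 2 e then 1 else 0)"
    and "joins E 2 4 e \<longleftrightarrow> c \<in> e"
    and "\<not> joins E 1 4 e"
    and "joins E 1 2 e \<or> joins E 2 2 e \<or> joins E 2 4 e"
    and "\<not> (joins E 1 2 e \<and> joins E 2 2 e)"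
    and "\<not> ((joins E 1 2 e \<or> joins E 2 2 e) \<and> joins E 2 4 e)"
  using assms assms(1)[unfolded single_hub_def]
  by (auto elim!: single_hub_edgeE simp: joins_doubleton conj_disj_distribR Collect_disj_eq Collect_conv_if)

lemma single_hub_edges_split:
  assumes "single_hub V E c"
  shows "E = {e \<in> E. joins E 1 2 e} \<union> {e \<in> E. joins E 2 2 e} \<union> {e \<in> E. joins E 2 4 e}"
    and "{e \<in> E. joins E 1 2 e} \<inter> {e \<in> E. joins E 2 2 e} = {}"
    and "({e \<in> E. joins E 1 2 e} \<union> {e \<in> E. joins E 2 2 e}) \<inter> {e \<in> E. joins E 2 4 e} = {}"
  using single_hub_joins(4-6)[OF assms] by blast+

lemma single_hub_vertices:
  assumes "single_hub V E c"
  shows "V = {v \<in> V. degree E v = 1} \<union> {v \<in> V. degree E v = 2} \<union> {c}"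
proof -
  have hub: "c \<in> V" "\<And>v. v \<in> V \<Longrightarrow> degree E v = 4 \<Longrightarrow> v = c" "\<And>v. v \<in> V \<Longrightarrow> degree E v \<noteq> 3"
    using assms unfolding single_hub_def by auto
  have "v \<in> {v \<in> V. degree E v = 1} \<union> {v \<in> V. degree E v = 2} \<union> {c}" if "v \<in> V" for v
    using degree_cases[OF that] hub(2,3)[OF that] that by auto
  then show ?thesis
    using hub(1) by blast
qed

lemma single_hub_num_deg:
  assumes "single_hub V E c"
  shows "num_deg V E 1 = 4" "num_deg V E 2 = card V - 5" "num_deg V E 3 = 0" "num_deg V E 4 = 1"
proof -
  define L where "L = {v \<in> V. degree E v = 1}"
  define M where "M = {v \<in> V. degree E v = 2}"
  have hub: "c \<in> V" "degree E c = 4" "\<And>v. v \<in> V \<Longrightarrow> degree E v = 4 \<Longrightarrow> v = c"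
    "\<And>v. v \<in> V \<Longrightarrow> degree E v \<noteq> 3"
    using assms unfolding single_hub_def by auto
  have V: "V = L \<union> M \<union> {c}"
    using single_hub_vertices[OF assms] unfolding L_def M_def .
  have disj: "L \<inter> M = {}" "c \<notin> L \<union> M"
    using hub(2) unfolding L_def M_def by auto
  have fin: "finite L" "finite M"
    using finite_V unfolding L_def M_def by simp_all
  have card_V: "card V = card L + card M + 1"
  proof -
    have "card V = card (L \<union> M) + card {c}"
      unfolding V using fin disj by (intro card_Un_disjoint) auto
    also have "card (L \<union> M) = card L + card M"
      using fin disj by (intro card_Un_disjoint) auto
    finally show ?thesis
      by simp
  qed
  have "(\<Sum>v\<in>V. degree E v) = (\<Sum>v\<in>L \<union> M. degree E v) + (\<Sum>v\<in>{c}. degree E v)"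
    unfolding V using fin disj by (intro sum.union_disjoint) auto
  also have "(\<Sum>v\<in>L \<union> M. degree E v) = (\<Sum>v\<in>L. degree E v) + (\<Sum>v\<in>M. degree E v)"
    using fin disj by (intro sum.union_disjoint) auto
  also have "(\<Sum>v\<in>L. degree E v) = (\<Sum>v\<in>L. 1)"
    unfolding L_def by (rule sum.cong) simp_all
  also have "(\<Sum>v\<in>M. degree E v) = (\<Sum>v\<in>M. 2)"
    unfolding M_def by (rule sum.cong) simp_all
  finally have "card L = 4"
    using handshake card_V hub(2) by simp
  then show "num_deg V E 1 = 4" "num_deg V E 2 = card V - 5"
    using card_V unfolding num_deg_def L_def M_def by simp_all
  have "{v \<in> V. degree E v = 4} = {c}"
    using hub(1,2) hub(3) by blast
  then show "num_deg V E 4 = 1"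
    unfolding num_deg_def by simp
  have "{v \<in> V. degree E v = 3} = {}"
    using hub(4) by blast
  then show "num_deg V E 3 = 0"
    unfolding num_deg_def by (simp only: card.empty)
qed

lemma single_hub_m_edges:
  assumes "single_hub V E c"
  shows "m_edges E 1 2 = 4" "m_edges E 2 4 = 4" "m_edges E 1 4 = 0" "m_edges E 2 2 + 9 = card V"
proof -
  have "m_edges E 1 2 = (\<Sum>e\<in>E. if joins E 1 2 e then 1 else 0)"
    using finite_E by (simp add: m_edges_eq_card_joins sum.inter_filter[symmetric])
  also have "\<dots> = (\<Sum>e\<in>E. card {v \<in> e. degree E v = 1})"
    using single_hub_joins(1)[OF assms] by simp
  also have "\<dots> = (\<Sum>v\<in>{v \<in> V. degree E v = 1}. degree E v)"
    by (rule sum_degree_filter[symmetric])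
  also have "\<dots> = num_deg V E 1"
    unfolding num_deg_def by simp
  finally show m12: "m_edges E 1 2 = 4"
    using single_hub_num_deg(1)[OF assms] by simp
  have "{e \<in> E. joins E 2 4 e} = {e \<in> E. c \<in> e}"
    using single_hub_joins(2)[OF assms] by blast
  moreover have "card {e \<in> E. c \<in> e} = 4"
    using assms unfolding single_hub_def degree_def by blast
  ultimately show m24: "m_edges E 2 4 = 4"
    unfolding m_edges_eq_card_joins by simp
  have "{e \<in> E. joins E 1 4 e} = {}"
    using single_hub_joins(3)[OF assms] by blast
  then show "m_edges E 1 4 = 0"
    unfolding m_edges_eq_card_joins by (simp only: card.empty)
  let ?A = "\<lambda>i j. {e \<in> E. joins E i j e}"
  have "card E = card (?A 1 2 \<union> ?A 2 2 \<union> ?A 2 4)"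
    using single_hub_edges_split(1)[OF assms] by (rule arg_cong)
  also have "\<dots> = card (?A 1 2) + card (?A 2 2) + card (?A 2 4)"
    using finite_E single_hub_edges_split(2,3)[OF assms] by (simp add: card_Un_disjoint)
  finally show "m_edges E 2 2 + 9 = card V"
    using m12 m24 card_E card_V_ge_3 unfolding m_edges_eq_card_joins by simp
qed

lemma single_hub_Phi:
  assumes "single_hub V E c"
  shows "Phi (card V) V E"
proof -
  have "m_edges E 2 2 = card V - 9"
    using single_hub_m_edges(4)[OF assms] by simp
  then show ?thesis
    using single_hub_num_deg[OF assms] single_hub_m_edges(1-3)[OF assms] chemical
    unfolding Phi_def by simp
qed

lemma single_hub_degree_index:
  assumes "single_hub V E c"
  shows "degree_index \<rho> E = phi_index \<rho> (card V)"
proof -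
  define A where "A i j = {e \<in> E. joins E i j e}" for i j
  have sum_A: "(\<Sum>e\<in>A i j. sqrt (\<Sum>w\<in>e. \<rho> (degree E w))) = m_edges E i j * sqrt (\<rho> i + \<rho> j)"
    for i j
  proof -
    have "(\<Sum>e\<in>A i j. sqrt (\<Sum>w\<in>e. \<rho> (degree E w))) = (\<Sum>e\<in>A i j. sqrt (\<rho> i + \<rho> j))"
      unfolding A_def by (rule sum.cong) (simp_all add: sum_joins)
    then show ?thesis
      unfolding A_def m_edges_eq_card_joins by simp
  qed
  have "degree_index \<rho> E = (\<Sum>e\<in>A 1 2 \<union> A 2 2 \<union> A 2 4. sqrt (\<Sum>w\<in>e. \<rho> (degree E w)))"
    unfolding degree_index_def A_def by (rule sum.cong[OF single_hub_edges_split(1)[OF assms] refl])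
  also have "\<dots> = (\<Sum>e\<in>A 1 2. sqrt (\<Sum>w\<in>e. \<rho> (degree E w))) + (\<Sum>e\<in>A 2 2. sqrt (\<Sum>w\<in>e. \<rho> (degree E w)))
      + (\<Sum>e\<in>A 2 4. sqrt (\<Sum>w\<in>e. \<rho> (degree E w)))"
    using finite_E single_hub_edges_split(2,3)[OF assms] unfolding A_def by (simp add: sum.union_disjoint)
  also have "\<dots> = m_edges E 1 2 * sqrt (\<rho> 1 + \<rho> 2) + m_edges E 2 2 * sqrt (\<rho> 2 + \<rho> 2)
      + m_edges E 2 4 * sqrt (\<rho> 2 + \<rho> 4)"
    unfolding sum_A ..
  also have "real (m_edges E 2 2) = real (card V) - 9"
    using single_hub_m_edges(4)[OF assms] by (metis add_diff_cancel_right' of_nat_add of_nat_numeral)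
  finally show ?thesis
    using single_hub_m_edges(1,2)[OF assms] unfolding phi_index_def by simp
qed

end

section \<open>Splitting the index into vertex shares\<close>

(* The last three assumptions say that a vertex of degree 3 has positive excess, a vertex of degree
   4 has nonnegative excess, and two vertices of degree 4 have more excess than the hub of a tree in
   Phi(n). *)
locale index_split =
  fixes \<rho> h :: "nat \<Rightarrow> real" and K :: real
  assumes split_ge: "\<And>i j. i \<in> {1..4} \<Longrightarrow> j \<in> {1..4} \<Longrightarrow> \<not> (i = 1 \<and> j = 1) \<Longrightarrow> \<not> (i = 4 \<and> j = 4)
      \<Longrightarrow> h i + h j \<le> sqrt (\<rho> i + \<rho> j)"
    and split_12: "sqrt (\<rho> 1 + \<rho> 2) = h 1 + h 2"
    and split_22: "sqrt (\<rho> 2 + \<rho> 2) = 2 * h 2"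
    and split_24: "sqrt (\<rho> 2 + \<rho> 4) = h 2 + h 4"
    and split_14: "h 1 + h 4 < sqrt (\<rho> 1 + \<rho> 4)"
    and split_44: "sqrt (\<rho> 4 + \<rho> 4) = 2 * K"
    and K_le: "K \<le> h 4"
    and excess_3: "4 * h 2 - h 1 < 3 * h 3"
    and excess_4: "0 \<le> 4 * K + 2 * h 1 - 6 * h 2"
    and two_hubs: "4 * h 4 + 2 * h 1 - 6 * h 2 < 2 * (4 * K + 2 * h 1 - 6 * h 2)"

locale weighted_chem_tree = chem_tree V E + index_split \<rho> h K
  for V :: "'a set" and E \<rho> h K
begin

definition share :: "'a set \<Rightarrow> 'a \<Rightarrow> real" where
  "share e v = (if \<forall>w\<in>e. degree E w = 4 then K else h (degree E v))"

definition slack :: "'a set \<Rightarrow> real" where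
  "slack e = sqrt (\<Sum>w\<in>e. \<rho> (degree E w)) - (\<Sum>v\<in>e. share e v)"

definition load :: "'a \<Rightarrow> real" where
  "load v = (\<Sum>e\<in>{e \<in> E. v \<in> e}. share e v)"

(* (2 - d) h 1 + 2 (d - 1) h 2 is the linear function of the degree d that agrees with the load
   d h(d) for d = 1, 2. *)
definition excess :: "'a \<Rightarrow> real" where
  "excess v = load v - ((2 - real (degree E v)) * h 1 + 2 * (real (degree E v) - 1) * h 2)"

lemma slack_doubleton:
  "a \<noteq> b \<Longrightarrow> slack {a, b} = sqrt (\<rho> (degree E a) + \<rho> (degree E b)) -
     (if degree E a = 4 \<and> degree E b = 4 then 2 * K else h (degree E a) + h (degree E b))"
  unfolding slack_def share_def by auto

lemma slack_nonneg:
  assumes "e \<in> E"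
  shows "0 \<le> slack e"
proof -
  obtain a b where ab: "e = {a, b}" "a \<noteq> b" "a \<in> V" "b \<in> V"
    using assms by (rule edgeE)
  have "\<not> (degree E a = 1 \<and> degree E b = 1)"
    using no_leaf_leaf_edge assms ab by blast
  moreover have "degree E a \<in> {1..4}" "degree E b \<in> {1..4}"
    using degree_ge_1 degree_le_4 ab(3,4) by auto
  ultimately show ?thesis
    using slack_doubleton[OF ab(2)] split_ge[of "degree E a" "degree E b"] split_44 ab(1) by auto
qed

lemma slack_hub_leaf_pos:
  assumes "degree E c = 4" "degree E w = 1"
  shows "0 < slack {c, w}"
proof -
  have "c \<noteq> w"
    using assms by auto
  then show ?thesis
    using slack_doubleton split_14 assms by (simp add: add.commute)
qed

lemma degree_index_eq_load_slack: "degree_index \<rho> E = (\<Sum>v\<in>V. load v) + (\<Sum>e\<in>E. slack e)"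
proof -
  have "degree_index \<rho> E = (\<Sum>e\<in>E. (\<Sum>v\<in>e. share e v) + slack e)"
    unfolding degree_index_def slack_def by simp
  also have "\<dots> = (\<Sum>v\<in>V. load v) + (\<Sum>e\<in>E. slack e)"
    unfolding sum.distrib sum_edges_swap load_def ..
  finally show ?thesis .
qed

lemma load_non_hub:
  assumes "degree E v \<noteq> 4"
  shows "load v = degree E v * h (degree E v)"
proof -
  have "load v = (\<Sum>e\<in>{e \<in> E. v \<in> e}. h (degree E v))"
    unfolding load_def share_def using assms by (intro sum.cong) auto
  then show ?thesis
    unfolding degree_def by simp
qed

lemma load_hub_ge:
  assumes "degree E v = 4"
  shows "4 * K \<le> load v"
proof -
  have "real (card {e \<in> E. v \<in> e}) * K \<le> load v"
    unfolding load_def share_def using assms K_le by (intro sum_bounded_below) auto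
  then show ?thesis
    using assms unfolding degree_def by simp
qed

lemma load_unique_hub:
  assumes "v \<in> V" "degree E v = 4" "\<And>u. u \<in> V \<Longrightarrow> degree E u = 4 \<Longrightarrow> u = v"
  shows "load v = 4 * h 4"
proof -
  have "share e v = h 4" if "e \<in> E" "v \<in> e" for e
  proof -
    obtain a b where "e = {a, b}" "a \<noteq> b" "a \<in> V" "b \<in> V"
      using \<open>e \<in> E\<close> by (rule edgeE)
    then have "\<not> (\<forall>w\<in>e. degree E w = 4)"
      using assms(3) by blast
    then show ?thesis
      unfolding share_def using assms(2) by auto
  qed
  then have "load v = (\<Sum>e\<in>{e \<in> E. v \<in> e}. h 4)"
    unfolding load_def by (intro sum.cong) auto
  then show ?thesis
    using assms(2) unfolding degree_def by simp
qed

lemma excess_deg3_pos: "degree E v = 3 \<Longrightarrow> 0 < excess v"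
  using load_non_hub excess_3 unfolding excess_def by simp

lemma excess_hub_ge: "degree E v = 4 \<Longrightarrow> 4 * K + 2 * h 1 - 6 * h 2 \<le> excess v"
  using load_hub_ge[of v] unfolding excess_def by simp

lemma excess_nonneg:
  assumes "v \<in> V"
  shows "0 \<le> excess v"
proof -
  consider "degree E v = 1" | "degree E v = 2" | "degree E v = 3" | "degree E v = 4"
    using degree_cases[OF assms] by blast
  then show ?thesis
  proof cases
    case 3
    then show ?thesis
      using excess_deg3_pos by fastforce
  next
    case 4
    then show ?thesis
      using excess_hub_ge[of v] excess_4 by linarith
  qed (simp_all add: excess_def load_non_hub)
qed

lemma excess_unique_hub:
  assumes "v \<in> V" "degree E v = 4" "\<And>u. u \<in> V \<Longrightarrow> degree E u = 4 \<Longrightarrow> u = v"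
  shows "excess v = 4 * h 4 + 2 * h 1 - 6 * h 2"
proof -
  have "load v = 4 * h 4"
    by (rule load_unique_hub[OF assms])
  then show ?thesis
    unfolding excess_def assms(2) by simp
qed

lemma degree_index_eq_phi_index:
  "degree_index \<rho> E = phi_index \<rho> (card V) - (4 * h 4 + 2 * h 1 - 6 * h 2)
     + (\<Sum>v\<in>V. excess v) + (\<Sum>e\<in>E. slack e)"
proof -
  let ?d = "\<lambda>v. real (degree E v)"
  have deg_sum: "(\<Sum>v\<in>V. ?d v) = 2 * real (card V) - 2"
  proof -
    have "(\<Sum>v\<in>V. ?d v) = real (2 * (card V - 1))"
      unfolding handshake[symmetric] by simp
    then show ?thesis
      using card_V_ge_3 by simp
  qed
  have "(\<Sum>v\<in>V. (2 - ?d v) * h 1 + 2 * (?d v - 1) * h 2)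
      = (\<Sum>v\<in>V. 2 - ?d v) * h 1 + (\<Sum>v\<in>V. 2 * (?d v - 1)) * h 2"
    by (simp add: sum.distrib sum_distrib_right)
  also have "\<dots> = 2 * h 1 + 2 * (real (card V) - 2) * h 2"
    using deg_sum by (simp add: sum_subtractf sum_distrib_left[symmetric] ring_distribs)
  finally have "(\<Sum>v\<in>V. load v) = (\<Sum>v\<in>V. excess v) + 2 * h 1 + 2 * (real (card V) - 2) * h 2"
    unfolding excess_def by (simp add: sum_subtractf)
  then show ?thesis
    unfolding degree_index_eq_load_slack phi_index_def split_12 split_22 split_24
    by (simp add: ring_distribs)
qed

lemma excess_le_sum: "v \<in> V \<Longrightarrow> excess v \<le> (\<Sum>u\<in>V. excess u)"
  using excess_nonneg finite_V by (intro member_le_sum) auto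

lemma excess_pair_le_sum:
  assumes "u \<in> V" "v \<in> V" "u \<noteq> v"
  shows "excess u + excess v \<le> (\<Sum>w\<in>V. excess w)"
proof -
  have "(\<Sum>w\<in>{u, v}. excess w) \<le> (\<Sum>w\<in>V. excess w)"
    using excess_nonneg finite_V assms(1,2) by (intro sum_mono2) auto
  then show ?thesis
    using assms(3) by simp
qed

lemma slack_le_sum: "e \<in> E \<Longrightarrow> slack e \<le> (\<Sum>f\<in>E. slack f)"
  using slack_nonneg finite_E by (intro member_le_sum) auto

lemma sum_slack_nonneg: "0 \<le> (\<Sum>e\<in>E. slack e)"
  by (rule sum_nonneg) (rule slack_nonneg)

theorem phi_index_less:
  assumes hub: "c \<in> V" "degree E c = 4" and not_single: "\<And>c. \<not> single_hub V E c"
  shows "phi_index \<rho> (card V) < degree_index \<rho> E"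
proof -
  let ?C = "4 * h 4 + 2 * h 1 - 6 * h 2"
  have "?C < (\<Sum>v\<in>V. excess v) + (\<Sum>e\<in>E. slack e)"
  proof (cases "\<forall>u\<in>V. degree E u = 4 \<longrightarrow> u = c")
    case False
    then obtain u where u: "u \<in> V" "degree E u = 4" "u \<noteq> c"
      by blast
    show ?thesis
      using excess_pair_le_sum[OF hub(1) u(1) u(3)[symmetric]] excess_hub_ge[OF hub(2)]
        excess_hub_ge[OF u(2)] two_hubs sum_slack_nonneg by argo
  next
    case True
    then have exc: "excess c = ?C"
      using excess_unique_hub hub by blast
    show ?thesis
    proof (cases "\<exists>v\<in>V. degree E v = 3")
      case True
      then obtain v where v: "v \<in> V" "degree E v = 3"
        by blast
      then have "c \<noteq> v"
        using hub(2) by auto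
      then show ?thesis
        using excess_pair_le_sum[OF hub(1) v(1)] excess_deg3_pos[OF v(2)] exc sum_slack_nonneg
        by argo
    next
      case False
      then obtain w where w: "{c, w} \<in> E" "degree E w = 1"
        using not_single[of c] True hub unfolding single_hub_def by blast
      then show ?thesis
        using exc excess_le_sum[OF hub(1)] slack_le_sum[OF w(1)] slack_hub_leaf_pos[OF hub(2) w(2)]
        by argo
    qed
  qed
  then show ?thesis
    unfolding degree_index_eq_phi_index by simp
qed

end

section \<open>Shares for SO and SO_red\<close>

lemma sqrt_between:
  assumes "0 \<le> a" "a\<^sup>2 \<le> x" "x \<le> b\<^sup>2" "0 \<le> b"
  shows "a \<le> sqrt x \<and> sqrt x \<le> b"
  using assms real_le_rsqrt real_sqrt_le_iff[of x "b\<^sup>2"] by auto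

lemma nat_1_4_cases: "i \<in> {1..4} \<Longrightarrow> i = 1 \<or> i = 2 \<or> i = 3 \<or> i = (4::nat)"
  by auto

(* h 1, h 2, h 4 and K are forced by the exact splits of the edges 1-2, 2-2, 2-4 and 4-4; h 3 just
   has to be large enough for excess_3 and small enough for the edges at a vertex of degree 3. *)
lemma index_split_SO:
  "index_split (\<lambda>k. (real k)\<^sup>2)
     (\<lambda>k. if k = 1 then sqrt 5 - sqrt 8 / 2 else if k = 2 then sqrt 8 / 2 else if k = 3 then 9 / 5
       else sqrt 20 - sqrt 8 / 2)
     (sqrt 32 / 2)"
proof -
  have bounds: "2.236 \<le> sqrt 5 \<and> sqrt 5 \<le> (2.2361::real)"
    "2.8284 \<le> sqrt 8 \<and> sqrt 8 \<le> (2.8285::real)" "3.1622 \<le> sqrt 10 \<and> sqrt 10 \<le> (3.1623::real)"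
    "3.6055 \<le> sqrt 13 \<and> sqrt 13 \<le> (3.6056::real)" "4.1231 \<le> sqrt 17 \<and> sqrt 17 \<le> (4.1232::real)"
    "4.2426 \<le> sqrt 18 \<and> sqrt 18 \<le> (4.2427::real)" "4.4721 \<le> sqrt 20 \<and> sqrt 20 \<le> (4.4722::real)"
    "5.6568 \<le> sqrt 32 \<and> sqrt 32 \<le> (5.6569::real)"
    by (rule sqrt_between; simp add: power2_eq_square)+
  have sqrt_25: "sqrt 25 = (5::real)"
    by (rule real_sqrt_unique) auto
  show ?thesis
  proof (unfold_locales, goal_cases)
    case (1 i j)
    then show ?case
      using nat_1_4_cases[OF 1(1)] nat_1_4_cases[OF 1(2)] bounds sqrt_25 by auto
  qed (use bounds in auto)
qed

lemma index_split_SO_red: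
  "index_split (\<lambda>k. (real k - 1)\<^sup>2)
     (\<lambda>k. if k = 1 then 1 - sqrt 2 / 2 else if k = 2 then sqrt 2 / 2 else if k = 3 then 1
       else sqrt 10 - sqrt 2 / 2)
     (sqrt 18 / 2)"
proof -
  have bounds: "1.4142 \<le> sqrt 2 \<and> sqrt 2 \<le> (1.4143::real)"
    "2.236 \<le> sqrt 5 \<and> sqrt 5 \<le> (2.2361::real)" "2.8284 \<le> sqrt 8 \<and> sqrt 8 \<le> (2.8285::real)"
    "3.1622 \<le> sqrt 10 \<and> sqrt 10 \<le> (3.1623::real)" "3.6055 \<le> sqrt 13 \<and> sqrt 13 \<le> (3.6056::real)"
    "4.2426 \<le> sqrt 18 \<and> sqrt 18 \<le> (4.2427::real)"
    by (rule sqrt_between; simp add: power2_eq_square)+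
  have sqrt_4_9: "sqrt 4 = (2::real)" "sqrt 9 = (3::real)"
    by (rule real_sqrt_unique; simp)+
  show ?thesis
  proof (unfold_locales, goal_cases)
    case (1 i j)
    then show ?case
      using nat_1_4_cases[OF 1(1)] nat_1_4_cases[OF 1(2)] bounds sqrt_4_9 by auto
  qed (use bounds sqrt_4_9 in auto)
qed

context chem_tree
begin

lemma phi_index_less_SO:
  assumes "c \<in> V" "degree E c = 4" "\<And>c. \<not> single_hub V E c"
  shows "phi_index (\<lambda>k. (real k)\<^sup>2) (card V) < SO E"
proof -
  interpret weighted_chem_tree V E "\<lambda>k. (real k)\<^sup>2"
    "\<lambda>k. if k = 1 then sqrt 5 - sqrt 8 / 2 else if k = 2 then sqrt 8 / 2 else if k = 3 then 9 / 5
      else sqrt 20 - sqrt 8 / 2"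
    "sqrt 32 / 2"
    using chem_tree_axioms index_split_SO by (simp add: weighted_chem_tree_def)
  show ?thesis
    unfolding SO_eq_degree_index using phi_index_less[OF assms] .
qed

lemma phi_index_less_SO_red:
  assumes "c \<in> V" "degree E c = 4" "\<And>c. \<not> single_hub V E c"
  shows "phi_index (\<lambda>k. (real k - 1)\<^sup>2) (card V) < SO_red E"
proof -
  interpret weighted_chem_tree V E "\<lambda>k. (real k - 1)\<^sup>2"
    "\<lambda>k. if k = 1 then 1 - sqrt 2 / 2 else if k = 2 then sqrt 2 / 2 else if k = 3 then 1
      else sqrt 10 - sqrt 2 / 2"
    "sqrt 18 / 2"
    using chem_tree_axioms index_split_SO_red by (simp add: weighted_chem_tree_def)
  show ?thesis
    unfolding SO_red_eq_degree_index using phi_index_less[OF assms] .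
qed

end

section \<open>Parent-pointer trees and the spider\<close>

locale parent_tree =
  fixes x :: "nat \<Rightarrow> 'a" and p :: "nat \<Rightarrow> nat" and n :: nat
  assumes inj_x: "inj_on x {..<n}" and parent_less: "\<And>j. 1 \<le> j \<Longrightarrow> j < n \<Longrightarrow> p j < j"
begin

definition edges :: "'a set set" where
  "edges = (\<lambda>j. {x (p j), x j}) ` {1..<n}"

lemma x_eq_iff: "a < n \<Longrightarrow> b < n \<Longrightarrow> x a = x b \<longleftrightarrow> a = b"
  using inj_x by (auto dest: inj_onD)

lemma parent_bound: "1 \<le> j \<Longrightarrow> j < n \<Longrightarrow> p j < n"
  using parent_less[of j] by simp

lemma card_vertices: "card (x ` {..<n}) = n"
  using inj_x by (simp add: card_image)

lemma inj_on_parent_edge: "inj_on (\<lambda>j. {x (p j), x j}) {1..<n}"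
proof (rule inj_onI)
  fix a b assume a: "a \<in> {1..<n}" and b: "b \<in> {1..<n}" and eq: "{x (p a), x a} = {x (p b), x b}"
  have "p a < a" "p b < b"
    using parent_less a b by auto
  with a b eq have "(p a = p b \<and> a = b) \<or> (p a = b \<and> a = p b)"
    by (auto simp: doubleton_eq_iff x_eq_iff)
  then show "a = b"
    using \<open>p a < a\<close> \<open>p b < b\<close> by auto
qed

lemma card_edges: "card edges = n - 1"
  unfolding edges_def using inj_on_parent_edge by (simp add: card_image)

lemma simple_graph_edges: "simple_graph (x ` {..<n}) edges"
  unfolding simple_graph_def edges_def
proof (intro conjI ballI)
  fix e assume "e \<in> (\<lambda>j. {x (p j), x j}) ` {1..<n}"
  then obtain j where j: "1 \<le> j" "j < n" "e = {x (p j), x j}"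
    by auto
  have "p j < j"
    using j(1,2) by (rule parent_less)
  then show "\<exists>u v. e = {u, v} \<and> u \<noteq> v \<and> u \<in> x ` {..<n} \<and> v \<in> x ` {..<n}"
    using j x_eq_iff[of "p j" j] by (intro exI[of _ "x (p j)"] exI[of _ "x j"]) auto
qed simp

lemma connected_edges:
  assumes "0 < n"
  shows "connected_graph (x ` {..<n}) edges"
proof -
  have reach: "(adj edges)\<^sup>*\<^sup>* (x 0) (x j)" if "j < n" for j
    using that
  proof (induction j rule: less_induct)
    case (less j)
    show ?case
    proof (cases "j = 0")
      case False
      then have "(adj edges)\<^sup>*\<^sup>* (x 0) (x (p j))"
        using less parent_less[of j] by simp
      moreover have "adj edges (x (p j)) (x j)"
        unfolding adj_def edges_def using False less.prems by auto
      ultimately show ?thesis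
        by simp
    qed simp
  qed
  have "symp (adj edges)"
    unfolding adj_def by (auto intro: sympI simp: insert_commute)
  then have "(adj edges)\<^sup>*\<^sup>* (x a) (x b)" if "a < n" "b < n" for a b
    using reach that by (meson rtranclp_trans symp_rtranclp sympD)
  then show ?thesis
    unfolding connected_graph_def using assms by auto
qed

lemma is_tree_edges: "0 < n \<Longrightarrow> is_tree (x ` {..<n}) edges"
  unfolding is_tree_def using simple_graph_edges connected_edges card_edges card_vertices by simp

lemma degree_edges:
  assumes "k < n"
  shows "degree edges (x k) = card {j \<in> {1..<n}. p j = k} + (if k = 0 then 0 else 1)"
proof -
  have "{e \<in> edges. x k \<in> e} = (\<lambda>j. {x (p j), x j}) ` {j \<in> {1..<n}. p j = k \<or> j = k}"
    unfolding edges_def using assms parent_bound by (auto simp: x_eq_iff)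
  moreover have "inj_on (\<lambda>j. {x (p j), x j}) {j \<in> {1..<n}. p j = k \<or> j = k}"
    by (rule inj_on_subset[OF inj_on_parent_edge]) auto
  ultimately have "degree edges (x k) = card {j \<in> {1..<n}. p j = k \<or> j = k}"
    unfolding degree_def by (simp add: card_image)
  also have "{j \<in> {1..<n}. p j = k \<or> j = k} = {j \<in> {1..<n}. p j = k} \<union> (if k = 0 then {} else {k})"
    using assms by auto
  also have "card \<dots> = card {j \<in> {1..<n}. p j = k} + (if k = 0 then 0 else 1)"
    using parent_less[of k] assms by (cases "k = 0") (simp_all add: card_insert_if)
  finally show ?thesis .
qed

lemma neighbour_edges:
  assumes "{x k, w} \<in> edges" "k < n"
  shows "(\<exists>j\<in>{1..<n}. p j = k \<and> w = x j) \<or> (1 \<le> k \<and> w = x (p k))"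
proof -
  obtain j where j: "j \<in> {1..<n}" "{x k, w} = {x (p j), x j}"
    using assms(1) unfolding edges_def by auto
  then have "p j < n"
    using parent_bound by simp
  then show ?thesis
    using j assms(2) by (auto simp: doubleton_eq_iff x_eq_iff)
qed

end

(* Vertex j > 0 hangs from j - 4: truncated subtraction makes 1, 2, 3, 4 the children of the root
   x 0, so there are four legs. *)
lemma spider:
  fixes x :: "nat \<Rightarrow> 'a"
  assumes inj: "inj_on x {..<n}" and n: "9 \<le> n"
  shows "chemical_tree (x ` {..<n}) (parent_tree.edges x (\<lambda>j. j - 4) n)"
    and "single_hub (x ` {..<n}) (parent_tree.edges x (\<lambda>j. j - 4) n) (x 0)"
proof -
  interpret parent_tree x "\<lambda>j. j - 4" n
    using inj by unfold_locales auto
  have "{j \<in> {1..<n}. j - 4 = 0} = {1, 2, 3, 4}"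
    using n by auto
  then have hub: "degree edges (x 0) = 4"
    using degree_edges[of 0] n by simp
  have leg: "degree edges (x k) = (if k + 4 < n then 2 else 1)" if "1 \<le> k" "k < n" for k
  proof -
    have "{j \<in> {1..<n}. j - 4 = k} = (if k + 4 < n then {k + 4} else {})"
      using that by auto
    then show ?thesis
      using degree_edges[of k] that by simp
  qed
  have small: "degree edges v \<le> 2" if "v \<in> x ` {..<n}" "v \<noteq> x 0" for v
    using that leg by (auto simp: x_eq_iff)
  show "chemical_tree (x ` {..<n}) edges"
    unfolding chemical_tree_def using is_tree_edges n hub small by force
  have "degree edges w \<noteq> 1" if w: "{x 0, w} \<in> edges" for w
  proof -
    obtain j where "1 \<le> j" "j \<le> 4" "w = x j"
      using neighbour_edges[OF w] n by auto
    then show ?thesis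
      using leg n by simp
  qed
  then show "single_hub (x ` {..<n}) edges (x 0)"
    unfolding single_hub_def using hub small n by fastforce
qed

lemma spider_exists:
  assumes "finite V" "9 \<le> card V"
  obtains E c where "chemical_tree V E" "single_hub V E c"
proof -
  obtain x where "bij_betw x {0..<card V} V"
    using ex_bij_betw_nat_finite[OF assms(1)] by blast
  then have "inj_on x {..<card V}" "x ` {..<card V} = V"
    unfolding bij_betw_def by (simp_all add: atLeast0LessThan)
  then show ?thesis
    using spider[of x "card V"] assms(2) that by metis
qed

theorem theorem3p1:
  fixes n :: nat and V :: "'a set" and E :: "'a set set"
  assumes "n \<ge> 9"
    and "chemical_tree V E" and "card V = n"
    and "max_degree V E = 4"
    and "\<not> Phi n V E"
  shows "\<exists>(V' :: 'a set) (E' :: 'a set set). Phi n V' E' \<and> SO E' < SO E \<and> SO_red E' < SO_red E"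
proof -
  interpret chem_tree V E
    using assms(1-3) by unfold_locales simp_all
  have "Max (degree E ` V) \<in> degree E ` V"
    using finite_V assms(1,3) by (intro Max_in) auto
  then obtain c where c: "c \<in> V" "degree E c = 4"
    using assms(4) unfolding max_degree_def by auto
  have not_single: "\<And>c. \<not> single_hub V E c"
    using single_hub_Phi assms(3,5) by blast
  obtain E' c' where E': "chemical_tree V E'" "single_hub V E' c'"
    using spider_exists finite_V assms(1,3) by metis
  interpret T': chem_tree V E'
    using E'(1) assms(1,3) by unfold_locales simp_all
  have "Phi n V E'"
    using T'.single_hub_Phi[OF E'(2)] assms(3) by simp
  moreover have "SO E' < SO E" "SO_red E' < SO_red E"
    using T'.single_hub_degree_index[OF E'(2)] phi_index_less_SO[OF c not_single]
      phi_index_less_SO_red[OF c not_single] assms(3)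
    by (simp_all add: SO_eq_degree_index SO_red_eq_degree_index)
  ultimately show ?thesis
    by blast
qed

end
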